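(* Let $A$, $B$ and $\psi$ be complex $D\times D$ matrices, where $\psi=\mathrm{diag}(\mu_1,\dots,\mu_D)$ is diagonal with $0\le\mu_1\le\mu_2\le\dots\le\mu_D$. For $1\le n\le D$ let $\psi_n=\mathrm{diag}(\mu_1,\dots,\mu_n,0,\dots,0)$. Then $$\chi_n(A\psi BB^\dagger\psi^\dagger A^\dagger)\le\mathrm{Tr}(A\psi_nBB^\dagger\psi_n^\dagger A^\dagger).$$
   Context: For a Hermitian $D\times D$ matrix $T$, $\chi_n(T)$ denotes the sum of its $n$ smallest eigenvalues counted with multiplicity. *)

theory Defs
  imports "Jordan_Normal_Form.Schur_Decomposition" "HOL-Library.Multiset"
begin

definition eigenvalues_mset :: "complex mat \<Rightarrow> complex multiset" where
  "eigenvalues_mset T = proots (char_poly T)"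

text \<open>chi_n(T): sum of the n smallest eigenvalues of a Hermitian matrix T
  (counted with multiplicity; the eigenvalues are real, so we take real parts).\<close>
definition chi :: "nat \<Rightarrow> complex mat \<Rightarrow> real" where
  "chi n T = sum_list (take n (sorted_list_of_multiset (image_mset Re (eigenvalues_mset T))))"

text \<open>diag(d_0, ..., d_{D-1}) as a D x D complex matrix (0-based indices).\<close>
definition diagm :: "nat \<Rightarrow> (nat \<Rightarrow> complex) \<Rightarrow> complex mat" where
  "diagm D d = mat D D (\<lambda>(i, j). if i = j then d i else 0)"

definition mtrace :: "complex mat \<Rightarrow> complex" where
  "mtrace M = (\<Sum>i<dim_row M. M $$ (i, i))"

end

theory Submission
  imports Defs
begin

(* Put X = A psi B and Xn = A psin B, so that the two matrices of the theorem
   are the Gram matrices M = X X^H and Mn = Xn Xn^H.  If a vector u satisfies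
   (A^H u)_j = 0 for all j >= n, then psi^H A^H u = psin^H A^H u, hence X^H u = Xn^H u.
   These vectors form a subspace of dimension >= n, so there is a unitary W whose first n
   columns lie in it.  With Z = X^H W and Zn = Xn^H W the first n columns of Z and Zn agree,
   and Z^H Z = W^H M W has the same eigenvalues as M. *)

lemma adjoint_dims[simp]:
  "dim_row (mat_adjoint A) = dim_col A" "dim_col (mat_adjoint A) = dim_row A"
  unfolding mat_adjoint_def by auto

lemma adjoint_carrier[simp]: "A \<in> carrier_mat n m \<Longrightarrow> mat_adjoint A \<in> carrier_mat m n"
  by (intro carrier_matI) (simp_all add: carrier_matD)

lemma adjoint_index[simp]:
  "i < dim_col A \<Longrightarrow> j < dim_row A \<Longrightarrow> mat_adjoint A $$ (i,j) = conjugate (A $$ (j,i))"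
  unfolding mat_adjoint_def by (simp add: mat_of_rows_index)

lemma adjoint_adjoint[simp]: "mat_adjoint (mat_adjoint (A :: complex mat)) = A"
  by (rule eq_matI) auto

lemma adjoint_mult:
  fixes A B :: "complex mat"
  assumes "A \<in> carrier_mat n m" "B \<in> carrier_mat m k"
  shows "mat_adjoint (A * B) = mat_adjoint B * mat_adjoint A"
proof (rule eq_matI)
  fix i j assume "i < dim_row (mat_adjoint B * mat_adjoint A)" "j < dim_col (mat_adjoint B * mat_adjoint A)"
  then have ij: "i < k" "j < n" using assms by auto
  have "mat_adjoint (A * B) $$ (i, j) = cnj (\<Sum>l<m. A $$ (j,l) * B $$ (l,i))"
    using ij assms by (simp add: scalar_prod_def lessThan_atLeast0)
  also have "\<dots> = (\<Sum>l<m. cnj (B $$ (l,i)) * cnj (A $$ (j,l)))"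
    by (simp add: ac_simps)
  also have "\<dots> = (mat_adjoint B * mat_adjoint A) $$ (i, j)"
    using ij assms by (simp add: scalar_prod_def lessThan_atLeast0)
  finally show "mat_adjoint (A * B) $$ (i, j) = (mat_adjoint B * mat_adjoint A) $$ (i, j)" .
qed (use assms in auto)

lemma gram_diag:
  fixes Z :: "complex mat"
  assumes Z: "Z \<in> carrier_mat m p" and k: "k < p"
  shows "(mat_adjoint Z * Z) $$ (k,k) = complex_of_real (\<Sum>l<m. (cmod (Z $$ (l,k)))^2)"
proof -
  have "(mat_adjoint Z * Z) $$ (k,k) = (\<Sum>l<m. cnj (Z $$ (l,k)) * Z $$ (l,k))"
    using Z k by (simp add: scalar_prod_def lessThan_atLeast0)
  also have "\<dots> = (\<Sum>l<m. complex_of_real ((cmod (Z $$ (l,k)))^2))"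
    by (rule sum.cong[OF refl]) (simp only: complex_norm_square mult.commute)
  finally show ?thesis by simp
qed

definition unitary :: "nat \<Rightarrow> complex mat \<Rightarrow> bool" where
  "unitary n U \<longleftrightarrow> U \<in> carrier_mat n n \<and> mat_adjoint U * U = 1\<^sub>m n \<and> U * mat_adjoint U = 1\<^sub>m n"

lemma unitary_adjoint: "unitary n U \<Longrightarrow> unitary n (mat_adjoint U)"
  unfolding unitary_def by auto

lemma unitary_col_norm:
  assumes U: "unitary n U" and j: "j < n"
  shows "(\<Sum>k<n. (cmod (U $$ (k,j)))^2) = 1"
proof -
  have "complex_of_real (\<Sum>k<n. (cmod (U $$ (k,j)))^2) = (mat_adjoint U * U) $$ (j,j)"
    using gram_diag[of U n n j] U j unfolding unitary_def by simp
  also have "\<dots> = 1" using U j unfolding unitary_def by simp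
  finally show ?thesis by (metis of_real_eq_1_iff)
qed

lemma unitary_row_norm:
  assumes U: "unitary n U" and k: "k < n"
  shows "(\<Sum>j<n. (cmod (U $$ (k,j)))^2) = 1"
proof -
  have "(\<Sum>j<n. (cmod (U $$ (k,j)))^2) = (\<Sum>j<n. (cmod (mat_adjoint U $$ (j,k)))^2)"
    using U k unfolding unitary_def by (intro sum.cong) auto
  also have "\<dots> = 1" by (rule unitary_col_norm[OF unitary_adjoint[OF U] k])
  finally show ?thesis .
qed

lemma unitary_conj_similar:
  assumes W: "unitary n W" and A: "A \<in> carrier_mat n n"
  shows "similar_mat_wit A (mat_adjoint W * A * W) W (mat_adjoint W)"
proof -
  have Wc: "W \<in> carrier_mat n n" and WW: "mat_adjoint W * W = 1\<^sub>m n" "W * mat_adjoint W = 1\<^sub>m n"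
    using W unfolding unitary_def by auto
  have "W * (mat_adjoint W * A * W) * mat_adjoint W = (W * mat_adjoint W) * A * (W * mat_adjoint W)"
    using A Wc by (simp add: assoc_mult_mat[of _ n n _ n _ n] mult_carrier_mat[of _ n n _ n])
  then show ?thesis
    using A Wc WW by (intro similar_mat_witI[of _ _ n]) auto
qed

definition orthonormal :: "complex vec list \<Rightarrow> bool" where
  "orthonormal ws \<longleftrightarrow>
     (\<forall>i<length ws. \<forall>j<length ws. ws ! i \<bullet>c ws ! j = (if i = j then 1 else 0))"

lemma normalize_vec:
  fixes v :: "complex vec"
  assumes v: "v \<in> carrier_vec n" "v \<noteq> 0\<^sub>v n"
  shows "\<exists>a. (a \<cdot>\<^sub>v v) \<bullet>c (a \<cdot>\<^sub>v v) = 1"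
proof -
  have pos: "v \<bullet>c v > 0" using v by simp
  define r where "r = Re (v \<bullet>c v)"
  have vr: "v \<bullet>c v = complex_of_real r" "r > 0" using pos unfolding r_def
    by (auto simp: less_complex_def complex_eq_iff)
  define a where "a = complex_of_real (1 / sqrt r)"
  have "(a \<cdot>\<^sub>v v) \<bullet>c (a \<cdot>\<^sub>v v) = a * conjugate a * (v \<bullet>c v)"
    unfolding conjugate_smult_vec using v by (simp add: ac_simps)
  also have "\<dots> = 1" using vr unfolding a_def
    by (simp add: field_simps flip: of_real_mult)
  finally show ?thesis by blast
qed

text \<open>Fewer than D linear conditions on D-dimensional complex space have a common nonzero solution;
  we obtain it from a singular matrix whose rows are the conditions.\<close>

lemma exists_null_vec:
  fixes cs :: "complex vec list"
  assumes cs: "set cs \<subseteq> carrier_vec D" and len: "length cs < D"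
  shows "\<exists>v \<in> carrier_vec D. v \<noteq> 0\<^sub>v D \<and> (\<forall>c\<in>set cs. c \<bullet> v = 0)"
proof -
  define f where "f = (\<lambda>i. if i < length cs then cs ! i else 0\<^sub>v D)"
  define G where "G = mat\<^sub>r D D (\<lambda>i. if i = D - 1 then 0\<^sub>v D else f i)"
  have fc: "f \<in> {0..<D} \<rightarrow> carrier_vec D" using cs unfolding f_def by (auto simp: nth_mem subsetD)
  have "det G = 0" unfolding G_def by (rule det_row_0[OF _ fc]) (use len in auto)
  moreover have G: "G \<in> carrier_mat D D" unfolding G_def by auto
  ultimately obtain v where v: "v \<in> carrier_vec D" "v \<noteq> 0\<^sub>v D" "G *\<^sub>v v = 0\<^sub>v D"
    using det_0_iff_vec_prod_zero[OF G] by auto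
  have "\<forall>c\<in>set cs. c \<bullet> v = 0"
  proof
    fix c assume "c \<in> set cs"
    then obtain i where i: "i < length cs" "c = cs ! i" by (auto simp: in_set_conv_nth)
    have "i < D" "i \<noteq> D - 1" using i len by auto
    have "(G *\<^sub>v v) $ i = row G i \<bullet> v" using \<open>i < D\<close> G by auto
    also have "row G i = c" unfolding G_def using \<open>i < D\<close> \<open>i \<noteq> D - 1\<close> i cs
      by (subst row_mat_of_row_fun) (auto simp: f_def nth_mem subsetD)
    finally show "c \<bullet> v = 0" using v \<open>i < D\<close> by auto
  qed
  with v show ?thesis by auto
qed

lemma exists_unit_null_vec:
  fixes cs :: "complex vec list"
  assumes cs: "set cs \<subseteq> carrier_vec D" and len: "length cs < D"
  shows "\<exists>v \<in> carrier_vec D. v \<bullet>c v = 1 \<and> (\<forall>c\<in>set cs. c \<bullet> v = 0)"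
proof -
  obtain v where v: "v \<in> carrier_vec D" "v \<noteq> 0\<^sub>v D" "\<forall>c\<in>set cs. c \<bullet> v = 0"
    using exists_null_vec[OF assms] by auto
  obtain a where a: "(a \<cdot>\<^sub>v v) \<bullet>c (a \<cdot>\<^sub>v v) = 1" using normalize_vec[OF v(1,2)] by auto
  have "\<forall>c\<in>set cs. c \<bullet> (a \<cdot>\<^sub>v v) = 0" using v cs
    by (auto intro!: scalar_prod_smult_distrib[of _ D, THEN trans] simp: subsetD)
  then show ?thesis using a v(1) by (intro bexI[of _ "a \<cdot>\<^sub>v v"]) auto
qed

lemma orthonormal_snoc:
  assumes vs: "set vs \<subseteq> carrier_vec D" and v: "v \<in> carrier_vec D"
    and o: "orthonormal vs" and vv: "v \<bullet>c v = 1" and perp: "\<forall>u\<in>set vs. conjugate u \<bullet> v = 0"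
  shows "orthonormal (vs @ [v])"
  unfolding orthonormal_def
proof (intro allI impI)
  fix i j assume i: "i < length (vs @ [v])" and j: "j < length (vs @ [v])"
  have uv: "u \<bullet>c v = 0" and vu: "v \<bullet>c u = 0" if "u \<in> set vs" for u
  proof -
    have u: "u \<in> carrier_vec D" using that vs by auto
    show "u \<bullet>c v = 0"
      using conjugate_conjugate_sprod[OF u v] perp that by simp
    show "v \<bullet>c u = 0"
      using conjugate_vec_sprod_comm[OF v u] perp that by simp
  qed
  show "(vs @ [v]) ! i \<bullet>c (vs @ [v]) ! j = (if i = j then 1 else 0)"
    using i j o uv[of "vs ! i"] vu[of "vs ! j"] vv
    by (cases "i < length vs"; cases "j < length vs")
       (auto simp: nth_append orthonormal_def less_Suc_eq)
qed

lemma orthonormal_extend: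
  fixes us cs :: "complex vec list"
  assumes us: "set us \<subseteq> carrier_vec D" and o: "orthonormal us" and cs: "set cs \<subseteq> carrier_vec D"
  shows "length us \<le> k \<Longrightarrow> length cs + k \<le> D \<Longrightarrow>
    \<exists>ws. set ws \<subseteq> carrier_vec D \<and> orthonormal (us @ ws) \<and> length (us @ ws) = k \<and>
         (\<forall>c\<in>set cs. \<forall>u\<in>set ws. c \<bullet> u = 0)"
proof (induction k)
  case 0 then show ?case using o by (intro exI[of _ "[]"]) auto
next
  case (Suc k)
  show ?case
  proof (cases "length us = Suc k")
    case True then show ?thesis using o by (intro exI[of _ "[]"]) auto
  next
    case False
    then obtain ws where ws: "set ws \<subseteq> carrier_vec D" "orthonormal (us @ ws)"
      "length (us @ ws) = k" "\<forall>c\<in>set cs. \<forall>u\<in>set ws. c \<bullet> u = 0" using Suc by auto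
    let ?vs = "us @ ws"
    have vs: "set ?vs \<subseteq> carrier_vec D" using us ws by auto
    have "set (cs @ map conjugate ?vs) \<subseteq> carrier_vec D" using cs vs by auto
    moreover have "length (cs @ map conjugate ?vs) < D" using Suc.prems ws by auto
    ultimately obtain v where v: "v \<in> carrier_vec D" "v \<bullet>c v = 1"
      "\<forall>c\<in>set (cs @ map conjugate ?vs). c \<bullet> v = 0"
      using exists_unit_null_vec by blast
    have "orthonormal (?vs @ [v])"
      by (rule orthonormal_snoc[OF vs v(1) ws(2) v(2)]) (use v(3) in auto)
    then show ?thesis using ws v by (intro exI[of _ "ws @ [v]"]) auto
  qed
qed

lemma unitary_of_orthonormal:
  assumes ws: "set ws \<subseteq> carrier_vec D" "length ws = D" "orthonormal ws"
  shows "unitary D (mat_of_cols D ws)"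
proof -
  define W where "W = mat_of_cols D ws"
  have W: "W \<in> carrier_mat D D" unfolding W_def using ws by auto
  have WW: "mat_adjoint W * W = 1\<^sub>m D"
  proof (rule eq_matI)
    fix i j assume "i < dim_row (1\<^sub>m D)" "j < dim_col (1\<^sub>m D)"
    then have ij: "i < D" "j < D" by auto
    have ci: "ws ! i \<in> carrier_vec D" "ws ! j \<in> carrier_vec D" using ws ij by (auto simp: nth_mem subsetD)
    have "(mat_adjoint W * W) $$ (i,j) = (\<Sum>l<D. cnj (ws ! i $ l) * ws ! j $ l)"
      using ij ws W unfolding W_def by (simp add: scalar_prod_def lessThan_atLeast0 mat_of_cols_index)
    also have "\<dots> = ws ! j \<bullet>c ws ! i"
      using ci by (simp add: scalar_prod_def lessThan_atLeast0 ac_simps)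
    also have "\<dots> = 1\<^sub>m D $$ (i,j)" using ws(3) ij ws(2) unfolding orthonormal_def by auto
    finally show "(mat_adjoint W * W) $$ (i,j) = 1\<^sub>m D $$ (i,j)" .
  qed (use W in auto)
  moreover have "W * mat_adjoint W = 1\<^sub>m D"
    by (rule mat_mult_left_right_inverse[OF _ W WW]) (use W in auto)
  ultimately show ?thesis using W unfolding unitary_def W_def by auto
qed

lemma corthogonal_inv_orthonormal:
  assumes ws: "set ws \<subseteq> carrier_vec n" "orthonormal ws"
  shows "corthogonal_inv (mat_of_cols n ws) = mat_adjoint (mat_of_cols n ws)"
proof -
  have inv_conj: "map vec_inv ws = map conjugate ws"
  proof (rule map_cong[OF refl])
    fix x assume "x \<in> set ws"
    then have "x \<bullet>c x = 1" using ws(2) unfolding orthonormal_def by (auto simp: in_set_conv_nth)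
    then show "vec_inv x = conjugate x" unfolding vec_inv_def by simp
  qed
  have "corthogonal_inv (mat_of_cols n ws) = mat_of_rows n (map vec_inv ws)"
    unfolding corthogonal_inv_def using ws(1) by simp
  also have "\<dots> = mat_adjoint (mat_of_cols n ws)"
    unfolding mat_adjoint_def inv_conj using ws(1) by simp
  finally show ?thesis .
qed

text \<open>Unitary Schur decomposition.  A unit eigenvector, completed to an orthonormal basis,
  gives a unitary W such that the first column of the conjugated matrix is e times the first
  unit vector.\<close>

lemma unitary_eigen_basis:
  fixes A :: "complex mat"
  assumes A: "A \<in> carrier_mat n n" and e: "eigenvalue A e"
  shows "n \<noteq> 0 \<and> (\<exists>W. unitary n W \<and>
           col (mat_adjoint W * A * W) 0 = vec n (\<lambda>i. if i = 0 then e else 0))"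
proof -
  obtain v0 where v0: "v0 \<in> carrier_vec n" "v0 \<noteq> 0\<^sub>v n" "A *\<^sub>v v0 = e \<cdot>\<^sub>v v0"
    using find_eigenvector[OF A e] A unfolding eigenvector_def by auto
  have n: "n \<noteq> 0"
  proof
    assume "n = 0"
    then have "v0 = 0\<^sub>v n" using v0(1) by (intro eq_vecI) auto
    then show False using v0(2) by simp
  qed
  obtain a where a: "(a \<cdot>\<^sub>v v0) \<bullet>c (a \<cdot>\<^sub>v v0) = 1" using normalize_vec[OF v0(1,2)] by auto
  define v where "v = a \<cdot>\<^sub>v v0"
  have v: "v \<in> carrier_vec n" "v \<noteq> 0\<^sub>v n" using v0(1) a unfolding v_def by auto
  have eigen: "A *\<^sub>v v = e \<cdot>\<^sub>v v" unfolding v_def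
    using mult_mat_vec[OF A v0(1), of a] v0(3) by (simp add: smult_smult_assoc mult.commute)
  have "orthonormal [v]" using a unfolding orthonormal_def v_def by auto
  then obtain ws' where ws': "set ws' \<subseteq> carrier_vec n" "orthonormal (v # ws')" "length (v # ws') = n"
    using orthonormal_extend[of "[v]" n "[]" n] v n by auto
  define ws where "ws = v # ws'"
  have ws: "set ws \<subseteq> carrier_vec n" "orthonormal ws" "length ws = n"
    using ws' v unfolding ws_def by auto
  have "corthogonal ws" using ws(2) unfolding orthonormal_def corthogonal_def by auto
  moreover have "hd ws = v" unfolding ws_def by simp
  ultimately have "col (corthogonal_inv (mat_of_cols n ws) * A * mat_of_cols n ws) 0
          = vec n (\<lambda>i. if i = 0 then e else 0)"
    using corthogonal_col_ev_0[OF A v eigen n _ ws(1) _ ws(3)] by blast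
  then have "col (mat_adjoint (mat_of_cols n ws) * A * mat_of_cols n ws) 0
          = vec n (\<lambda>i. if i = 0 then e else 0)"
    by (simp only: corthogonal_inv_orthonormal[OF ws(1,2)])
  then show ?thesis using n unitary_of_orthonormal[OF ws(1,3,2)] by blast
qed

lemma first_col_block:
  fixes A :: "complex mat"
  assumes A: "A \<in> carrier_mat n n" and n: "n \<noteq> 0"
    and col0: "col A 0 = vec n (\<lambda>i. if i = 0 then e else 0)"
  shows "\<exists>A2 A3. A2 \<in> carrier_mat 1 (n-1) \<and> A3 \<in> carrier_mat (n-1) (n-1) \<and>
           A = four_block_mat (mat 1 1 (\<lambda>_. e)) A2 (0\<^sub>m (n-1) 1) A3"
proof -
  obtain A1 A2 A0 A3 where split: "split_block A 1 1 = (A1,A2,A0,A3)"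
    by (cases "split_block A 1 1") auto
  have "dim_row A = 1 + (n-1)" "dim_col A = 1 + (n-1)" using A n by auto
  from split_block[OF split this]
  have A2: "A2 \<in> carrier_mat 1 (n-1)" and A3: "A3 \<in> carrier_mat (n-1) (n-1)"
    and block: "A = four_block_mat A1 A2 A0 A3" by auto
  have "A1 = mat 1 1 (\<lambda>_. e)"
    using split[unfolded split_block_def Let_def] arg_cong[OF col0, of "\<lambda>v. v $ 0"] A n
    by (auto simp: col_def)
  moreover have "A0 = 0\<^sub>m (n-1) 1"
  proof -
    have "A $$ (Suc i, 0) = 0" if "i < n - 1" for i
      using arg_cong[OF col0, of "\<lambda>v. v $ Suc i"] that A by auto
    then show ?thesis using split[unfolded split_block_def Let_def] A by auto
  qed
  ultimately show ?thesis using A2 A3 block by blast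
qed

text \<open>Triangularising the lower-right block of such a block matrix triangularises the whole
  matrix, with a unitary of the form diag(1, P).\<close>

lemma block_schur_step:
  fixes A2 A3 T3 P :: "complex mat"
  assumes A2: "A2 \<in> carrier_mat 1 m" and A3: "A3 \<in> carrier_mat m m"
    and sim3: "similar_mat_wit A3 T3 P (mat_adjoint P)" and ut3: "upper_triangular T3"
  shows "\<exists>T U. similar_mat_wit (four_block_mat (mat 1 1 (\<lambda>_. e)) A2 (0\<^sub>m m 1) A3) T U (mat_adjoint U)
           \<and> upper_triangular T \<and> diag_mat T = e # diag_mat T3"
proof -
  define E where "E = (mat 1 1 (\<lambda>_. e) :: complex mat)"
  have E: "E \<in> carrier_mat 1 1" and utE: "upper_triangular E" and diagE: "diag_mat E = [e]"
    unfolding E_def by (auto simp: diag_mat_def)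
  from similar_mat_witD2[OF A3 sim3]
  have T3: "T3 \<in> carrier_mat m m" and P: "P \<in> carrier_mat m m" and PP: "P * mat_adjoint P = 1\<^sub>m m"
    by auto
  define U where "U = four_block_mat (1\<^sub>m 1) (0\<^sub>m 1 m) (0\<^sub>m m 1) P"
  have Uadj: "mat_adjoint U = four_block_mat (1\<^sub>m 1) (0\<^sub>m 1 m) (0\<^sub>m m 1) (mat_adjoint P)"
    unfolding U_def by (rule eq_matI) (use P in auto)
  have A2PP: "A2 * P * mat_adjoint P = A2"
    using A2 P PP by (simp add: assoc_mult_mat[OF A2 P adjoint_carrier[OF P]])
  define T where "T = four_block_mat E (A2 * P) (0\<^sub>m m 1) T3"
  have "similar_mat_wit (four_block_mat E A2 (0\<^sub>m m 1) A3) T U (mat_adjoint U)"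
    unfolding T_def Uadj unfolding U_def
    by (rule similar_mat_wit_four_block[OF similar_mat_wit_refl[OF E] sim3 _ _ E A3])
       (use A2PP A2 P in auto)
  moreover have "upper_triangular T"
    unfolding T_def by (rule upper_triangular_four_block[OF E T3 utE ut3])
  moreover have "diag_mat T = e # diag_mat T3"
    unfolding T_def diag_four_block_mat[OF E T3] diagE by simp
  ultimately show ?thesis unfolding E_def by blast
qed

lemma unitary_schur:
  assumes "(A :: complex mat) \<in> carrier_mat n n"
      and "char_poly A = (\<Prod>e\<leftarrow>es. [:- e, 1:])"
  shows "\<exists>T U. similar_mat_wit A T U (mat_adjoint U) \<and> upper_triangular T \<and> diag_mat T = es"
  using assms
proof (induction es arbitrary: n A)
  case Nil
  then have "n = 0" using degree_monic_char_poly[of A n] by auto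
  then show ?case using Nil
    by (intro exI[of _ A] exI[of _ "1\<^sub>m 0"]) (auto simp: similar_mat_wit_def diag_mat_def)
next
  case (Cons e es n A)
  have A: "A \<in> carrier_mat n n" using Cons.prems by simp
  have cp: "char_poly A = [: -e, 1 :] * (\<Prod>e\<leftarrow>es. [:- e, 1:])" using Cons.prems by simp
  then have "eigenvalue A e" unfolding eigenvalue_root_char_poly[OF A] by simp
  then obtain W where n: "n \<noteq> 0" and W: "unitary n W"
    and col0: "col (mat_adjoint W * A * W) 0 = vec n (\<lambda>i. if i = 0 then e else 0)"
    using unitary_eigen_basis[OF A] by blast
  define A' where "A' = mat_adjoint W * A * W"
  have simAA': "similar_mat_wit A A' W (mat_adjoint W)"
    unfolding A'_def by (rule unitary_conj_similar[OF W A])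
  have Wc: "W \<in> carrier_mat n n" and A': "A' \<in> carrier_mat n n"
    using similar_mat_witD2[OF A simAA'] by auto
  obtain A2 A3 where A2: "A2 \<in> carrier_mat 1 (n-1)" and A3: "A3 \<in> carrier_mat (n-1) (n-1)"
    and block: "A' = four_block_mat (mat 1 1 (\<lambda>_. e)) A2 (0\<^sub>m (n-1) 1) A3"
    using first_col_block[OF A' n col0[folded A'_def]] by blast
  have "char_poly A' = char_poly A"
    using simAA' by (intro char_poly_similar) (auto simp: similar_mat_def dest: similar_mat_wit_sym)
  also have "char_poly A' = [: -e, 1 :] * char_poly A3"
    unfolding block by (subst char_poly_four_block_zeros_col[OF _ A2 A3])
      (auto simp: char_poly_defs det_def sign_def)
  finally have "char_poly A3 = (\<Prod>e\<leftarrow>es. [:- e, 1:])"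
    unfolding cp by (metis mult_cancel_left pCons_eq_0_iff zero_neq_one)
  from Cons.IH[OF A3 this] obtain T3 P where sim3: "similar_mat_wit A3 T3 P (mat_adjoint P)"
    and ut3: "upper_triangular T3" and diag3: "diag_mat T3 = es" by blast
  obtain T U where simA'T: "similar_mat_wit A' T U (mat_adjoint U)"
    and ut: "upper_triangular T" and diag: "diag_mat T = e # es"
    using block_schur_step[OF A2 A3 sim3 ut3, of e] diag3 block by auto
  have U: "U \<in> carrier_mat n n" using similar_mat_witD2[OF A' simA'T] by auto
  have "mat_adjoint U * mat_adjoint W = mat_adjoint (W * U)"
    using adjoint_mult[OF Wc U] by simp
  then show ?case using similar_mat_wit_trans[OF simAA' simA'T] ut diag by metis
qed

text \<open>Spectral theorem for Hermitian matrices: the Schur form of a Hermitian matrix is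
  diagonal, and its diagonal lists the eigenvalues.\<close>

lemma proots_linear_prod: "proots (\<Prod>(e::complex)\<leftarrow>es. [:- e, 1:]) = mset es"
proof (induct es)
  case (Cons e es)
  have "(\<Prod>(e::complex)\<leftarrow>es. [:- e, 1:]) \<noteq> 0" by (auto simp: prod_list_zero_iff)
  then have "proots ([:- e, 1:] * (\<Prod>(e::complex)\<leftarrow>es. [:- e, 1:])) = {#e#} + mset es"
    using Cons by (subst proots_mult) (simp_all only: proots_linear_factor minus_minus, simp_all)
  then show ?case by simp
qed simp

lemma hermitian_diagonalization:
  fixes M :: "complex mat"
  assumes M: "M \<in> carrier_mat D D" and herm: "mat_adjoint M = M"
  shows "\<exists>U T. unitary D U \<and> T \<in> carrier_mat D D \<and> M = U * T * mat_adjoint U \<and>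
           (\<forall>i<D. \<forall>j<D. i \<noteq> j \<longrightarrow> T $$ (i,j) = 0) \<and>
           eigenvalues_mset M = mset (map (\<lambda>j. T $$ (j,j)) [0..<D])"
proof -
  obtain es where es: "char_poly M = (\<Prod>a\<leftarrow>es. [:- a, 1:])"
    using char_poly_factorized[OF M] by auto
  obtain T U where sim: "similar_mat_wit M T U (mat_adjoint U)" and ut: "upper_triangular T"
    and dT: "diag_mat T = es"
    using unitary_schur[OF M es] by auto
  note sim_facts = similar_mat_witD2[OF M sim]
  have UU: "U * mat_adjoint U = 1\<^sub>m D" "mat_adjoint U * U = 1\<^sub>m D" using sim_facts(1,2) .
  have MT: "M = U * T * mat_adjoint U" using sim_facts(3) .
  have T: "T \<in> carrier_mat D D" and Uc: "U \<in> carrier_mat D D" using sim_facts(5,6) .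
  have U: "unitary D U" using UU Uc unfolding unitary_def by auto
  have Ua: "mat_adjoint U \<in> carrier_mat D D" using Uc by simp
  note assoc = assoc_mult_mat[of _ D D _ D _ D] and carr = mult_carrier_mat[of _ D D _ D]
  have TM: "T = mat_adjoint U * M * U"
  proof -
    have "mat_adjoint U * M * U = (mat_adjoint U * U) * T * (mat_adjoint U * U)"
      unfolding MT using Uc T Ua by (simp add: assoc carr)
    then show ?thesis using UU T by simp
  qed
  have "mat_adjoint T = T"
  proof -
    have "mat_adjoint T = mat_adjoint U * mat_adjoint M * U"
      unfolding TM using Uc Ua M by (simp add: adjoint_mult[of _ D D _ D] assoc carr)
    then show ?thesis using herm TM by simp
  qed
  then have Tcnj: "T $$ (i,j) = cnj (T $$ (j,i))" if "i < D" "j < D" for i j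
    using that T adjoint_index[of i T j] by auto
  have "\<forall>i<D. \<forall>j<D. i \<noteq> j \<longrightarrow> T $$ (i,j) = 0"
  proof (intro allI impI)
    fix i j assume ij: "i < D" "j < D" "i \<noteq> j"
    show "T $$ (i,j) = 0"
    proof (cases "j < i")
      case True then show ?thesis using ut ij T unfolding upper_triangular_def by auto
    next
      case False
      then have "T $$ (j,i) = 0" using ut ij T unfolding upper_triangular_def by auto
      then show ?thesis using Tcnj[OF ij(1,2)] by simp
    qed
  qed
  moreover have "eigenvalues_mset M = mset (map (\<lambda>j. T $$ (j,j)) [0..<D])"
  proof -
    have "es = map (\<lambda>j. T $$ (j,j)) [0..<D]" using dT T unfolding diag_mat_def by auto
    then show ?thesis unfolding eigenvalues_mset_def es proots_linear_prod by simp
  qed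
  ultimately show ?thesis using U T MT by blast
qed

lemma diag_conj_entry:
  fixes U T :: "complex mat"
  assumes U: "U \<in> carrier_mat D D" and T: "T \<in> carrier_mat D D"
    and diag: "\<forall>i<D. \<forall>j<D. i \<noteq> j \<longrightarrow> T $$ (i,j) = 0" and k: "k < D"
  shows "(U * T * mat_adjoint U) $$ (k,k) = (\<Sum>j<D. T $$ (j,j) * complex_of_real ((cmod (U $$ (k,j)))^2))"
proof -
  have UT: "(U * T) $$ (k,l) = U $$ (k,l) * T $$ (l,l)" if l: "l < D" for l
  proof -
    have "(U * T) $$ (k,l) = (\<Sum>j<D. U $$ (k,j) * T $$ (j,l))"
      using U T k l by (simp add: scalar_prod_def lessThan_atLeast0)
    also have "\<dots> = (\<Sum>j<D. if j = l then U $$ (k,l) * T $$ (l,l) else 0)"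
      by (rule sum.cong[OF refl]) (use diag l in auto)
    finally show ?thesis using l by simp
  qed
  have "(U * T * mat_adjoint U) $$ (k,k) = (\<Sum>l<D. (U * T) $$ (k,l) * cnj (U $$ (k,l)))"
    using U T k by (simp add: scalar_prod_def lessThan_atLeast0)
  also have "\<dots> = (\<Sum>l<D. T $$ (l,l) * complex_of_real ((cmod (U $$ (k,l)))^2))"
  proof (rule sum.cong[OF refl])
    fix l assume "l \<in> {..<D}"
    then have "(U * T) $$ (k,l) = U $$ (k,l) * T $$ (l,l)" using UT by auto
    then show "(U * T) $$ (k,l) * cnj (U $$ (k,l)) = T $$ (l,l) * complex_of_real ((cmod (U $$ (k,l)))^2)"
      by (simp only: complex_norm_square ac_simps)
  qed
  finally show ?thesis .
qed

lemma sum_take_sorted_threshold: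
  fixes s :: "real list"
  assumes "sorted s" "1 \<le> n" "n \<le> length s"
  shows "sum_list (take n s) = real n * s!(n-1) + (\<Sum>x\<leftarrow>s. min (x - s!(n-1)) 0)"
proof -
  let ?t = "s!(n-1)"
  have "(\<Sum>x\<leftarrow>s. min (x - ?t) 0) = (\<Sum>x\<leftarrow>take n s. min (x - ?t) 0) + (\<Sum>x\<leftarrow>drop n s. min (x - ?t) 0)"
    by (subst append_take_drop_id[symmetric, of s n], simp only: map_append sum_list_append)
  also have "(\<Sum>x\<leftarrow>drop n s. min (x - ?t) 0) = (\<Sum>x\<leftarrow>drop n s. 0)"
  proof (rule arg_cong[where f=sum_list], rule map_cong[OF refl])
    fix x assume "x \<in> set (drop n s)"
    then obtain i where "i < length (drop n s)" "x = drop n s ! i" by (auto simp: in_set_conv_nth)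
    then have "n + i < length s" "x = s ! (n + i)" using assms by auto
    then have "?t \<le> x" using sorted_nth_mono[OF assms(1), of "n-1" "n+i"] by simp
    then show "min (x - ?t) 0 = 0" by simp
  qed
  also have "(\<Sum>x\<leftarrow>take n s. min (x - ?t) 0) = (\<Sum>x\<leftarrow>take n s. x - ?t)"
  proof (rule arg_cong[where f=sum_list], rule map_cong[OF refl])
    fix x assume "x \<in> set (take n s)"
    then obtain i where "i < n" "x = s ! i" using assms by (auto simp: in_set_conv_nth)
    then have "x \<le> ?t" using sorted_nth_mono[OF assms(1), of i "n-1"] assms by simp
    then show "min (x - ?t) 0 = x - ?t" by simp
  qed
  also have "(\<Sum>x\<leftarrow>take n s. x - ?t) = sum_list (take n s) - real n * ?t"
    using assms by (simp add: sum_list_subtractf sum_list_triv)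
  finally show ?thesis by simp
qed

lemma sum_smallest_le_weighted:
  fixes lam w :: "nat \<Rightarrow> real"
  assumes w: "\<forall>j<D. 0 \<le> w j \<and> w j \<le> 1" and sw: "(\<Sum>j<D. w j) = real n"
    and n: "1 \<le> n" "n \<le> D"
  shows "sum_list (take n (sort (map lam [0..<D]))) \<le> (\<Sum>j<D. lam j * w j)"
proof -
  define s where "s = sort (map lam [0..<D])"
  define t where "t = s!(n-1)"
  have "sum_list (take n s) = real n * t + (\<Sum>x\<leftarrow>s. min (x - t) 0)"
    unfolding t_def s_def by (rule sum_take_sorted_threshold) (use n in auto)
  also have "(\<Sum>x\<leftarrow>s. min (x - t) 0) = (\<Sum>x\<leftarrow>map lam [0..<D]. min (x - t) 0)"
  proof -
    have "mset (map (\<lambda>x. min (x - t) 0) s) = mset (map (\<lambda>x. min (x - t) 0) (map lam [0..<D]))"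
      unfolding s_def by (simp only: mset_map mset_sort)
    then show ?thesis by (simp only: sum_mset_sum_list[symmetric])
  qed
  also have "\<dots> = (\<Sum>j<D. min (lam j - t) 0)"
    by (simp add: sum_list_distinct_conv_sum_set lessThan_atLeast0)
  also have "\<dots> \<le> (\<Sum>j<D. (lam j - t) * w j)"
  proof (rule sum_mono)
    fix j assume "j \<in> {..<D}"
    then have "0 \<le> w j" "w j \<le> 1" using w by auto
    then show "min (lam j - t) 0 \<le> (lam j - t) * w j"
    proof (cases "lam j - t \<ge> 0")
      case False
      then have "(lam j - t) * 1 \<le> (lam j - t) * w j"
        using \<open>w j \<le> 1\<close> by (intro mult_left_mono_neg) auto
      then show ?thesis using False by simp
    qed simp
  qed
  also have "(\<Sum>j<D. (lam j - t) * w j) = (\<Sum>j<D. lam j * w j) - t * real n"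
    by (simp add: left_diff_distrib sum_subtractf sum_distrib_left[symmetric] sw)
  finally show ?thesis unfolding s_def by (simp add: algebra_simps)
qed

text \<open>Writing M = U diag(lam) U^H, the k-th
  diagonal entry is sum_j lam_j |U_kj|^2, and the weights w_j = sum_{k<n} |U_kj|^2 lie in
  [0,1] and sum to n.\<close>

lemma ky_fan_diag:
  fixes M :: "complex mat"
  assumes M: "M \<in> carrier_mat D D" and herm: "mat_adjoint M = M" and n: "1 \<le> n" "n \<le> D"
  shows "chi n M \<le> (\<Sum>k<n. Re (M $$ (k,k)))"
proof -
  obtain U T where U: "unitary D U" and T: "T \<in> carrier_mat D D" and MT: "M = U * T * mat_adjoint U"
    and diag: "\<forall>i<D. \<forall>j<D. i \<noteq> j \<longrightarrow> T $$ (i,j) = 0"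
    and ev: "eigenvalues_mset M = mset (map (\<lambda>j. T $$ (j,j)) [0..<D])"
    using hermitian_diagonalization[OF M herm] by blast
  have Uc: "U \<in> carrier_mat D D" using U unfolding unitary_def by simp
  define lam where "lam j = Re (T $$ (j,j))" for j
  define w where "w j = (\<Sum>k<n. (cmod (U $$ (k,j)))^2)" for j
  have w01: "\<forall>j<D. 0 \<le> w j \<and> w j \<le> 1"
  proof (intro allI impI conjI)
    fix j assume j: "j < D"
    show "0 \<le> w j" unfolding w_def by (intro sum_nonneg) auto
    have "w j \<le> (\<Sum>k<D. (cmod (U $$ (k,j)))^2)" unfolding w_def
      by (rule sum_mono2) (use n in auto)
    then show "w j \<le> 1" using unitary_col_norm[OF U j] by simp
  qed
  have "(\<Sum>j<D. w j) = (\<Sum>k<n. \<Sum>j<D. (cmod (U $$ (k,j)))^2)"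
    unfolding w_def by (rule sum.swap)
  also have "\<dots> = real n" using unitary_row_norm[OF U] n by simp
  finally have wsum: "(\<Sum>j<D. w j) = real n" .
  have "(\<Sum>k<n. Re (M $$ (k,k))) = (\<Sum>k<n. \<Sum>j<D. lam j * (cmod (U $$ (k,j)))^2)"
    using n unfolding MT lam_def by (intro sum.cong) (auto simp: diag_conj_entry[OF Uc T diag] Re_sum)
  also have "\<dots> = (\<Sum>j<D. lam j * w j)"
    unfolding w_def by (subst sum.swap) (simp add: sum_distrib_left)
  finally have diag_sum: "(\<Sum>k<n. Re (M $$ (k,k))) = (\<Sum>j<D. lam j * w j)" .
  have "image_mset Re (eigenvalues_mset M) = mset (map Re (map (\<lambda>j. T $$ (j,j)) [0..<D]))"
    unfolding ev by (rule mset_map[symmetric])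
  also have "\<dots> = mset (map lam [0..<D])" unfolding lam_def by (simp add: comp_def)
  finally have "image_mset Re (eigenvalues_mset M) = mset (map lam [0..<D])" .
  then have "chi n M = sum_list (take n (sort (map lam [0..<D])))"
    unfolding chi_def by (simp only: sorted_list_of_multiset_mset)
  also have "\<dots> \<le> (\<Sum>j<D. lam j * w j)" by (rule sum_smallest_le_weighted[OF w01 wsum n])
  finally show ?thesis using diag_sum by simp
qed

lemma mtrace_comm:
  fixes P Q :: "complex mat"
  assumes P: "P \<in> carrier_mat n m" and Q: "Q \<in> carrier_mat m n"
  shows "mtrace (P * Q) = mtrace (Q * P)"
proof -
  have "mtrace (P * Q) = (\<Sum>i<n. \<Sum>j<m. P $$ (i,j) * Q $$ (j,i))"
    unfolding mtrace_def using P Q by (simp add: scalar_prod_def lessThan_atLeast0)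
  also have "\<dots> = (\<Sum>j<m. \<Sum>i<n. Q $$ (j,i) * P $$ (i,j))"
    by (subst sum.swap) (simp add: mult.commute)
  also have "\<dots> = mtrace (Q * P)"
    unfolding mtrace_def using P Q by (simp add: scalar_prod_def lessThan_atLeast0)
  finally show ?thesis .
qed

lemma mtrace_unitary_conj:
  assumes W: "unitary D W" and M: "M \<in> carrier_mat D D"
  shows "mtrace (mat_adjoint W * M * W) = mtrace M"
proof -
  have Wc: "W \<in> carrier_mat D D" and WW: "W * mat_adjoint W = 1\<^sub>m D"
    using W unfolding unitary_def by auto
  have "mtrace (mat_adjoint W * M * W) = mtrace (mat_adjoint W * (M * W))"
    using Wc M by (simp add: assoc_mult_mat[of _ D D _ D _ D])
  also have "\<dots> = mtrace (M * W * mat_adjoint W)"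
    by (rule mtrace_comm) (use Wc M in auto)
  also have "\<dots> = mtrace M"
    using Wc M WW by (simp add: assoc_mult_mat[of _ D D _ D _ D])
  finally show ?thesis .
qed

lemma mtrace_gram:
  fixes Z :: "complex mat"
  assumes Z: "Z \<in> carrier_mat D D"
  shows "Re (mtrace (mat_adjoint Z * Z)) = (\<Sum>k<D. \<Sum>l<D. (cmod (Z $$ (l,k)))^2)"
proof -
  have "mtrace (mat_adjoint Z * Z) = (\<Sum>k<D. (mat_adjoint Z * Z) $$ (k,k))"
    unfolding mtrace_def using Z by simp
  also have "\<dots> = (\<Sum>k<D. complex_of_real (\<Sum>l<D. (cmod (Z $$ (l,k)))^2))"
    by (intro sum.cong) (auto simp: gram_diag[OF Z])
  finally show ?thesis by (simp add: Re_sum)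
qed

text \<open>chi_n only depends on the characteristic polynomial, so it is invariant under
  unitary conjugation.\<close>

lemma chi_unitary_conj:
  assumes W: "unitary D W" and M: "M \<in> carrier_mat D D"
  shows "chi n (mat_adjoint W * M * W) = chi n M"
proof -
  have "char_poly M = char_poly (mat_adjoint W * M * W)"
    using unitary_conj_similar[OF W M] by (intro char_poly_similar) (auto simp: similar_mat_def)
  then show ?thesis unfolding chi_def eigenvalues_mset_def by simp
qed

text \<open>If the first n columns of Z and Zn coincide, then chi_n(Z^H Z) is bounded by the
  trace of Zn^H Zn: by Ky Fan it is at most the squared norm of the first n columns.\<close>

lemma chi_gram_le_trace:
  fixes Z Zn :: "complex mat"
  assumes Z: "Z \<in> carrier_mat D D" and Zn: "Zn \<in> carrier_mat D D"
    and agree: "\<forall>k<n. col Z k = col Zn k" and n: "1 \<le> n" "n \<le> D"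
  shows "chi n (mat_adjoint Z * Z) \<le> Re (mtrace (mat_adjoint Zn * Zn))"
proof -
  have ZZ: "mat_adjoint Z * Z \<in> carrier_mat D D" using Z by auto
  have herm: "mat_adjoint (mat_adjoint Z * Z) = mat_adjoint Z * Z"
    using Z by (simp add: adjoint_mult[of _ D D _ D])
  have entries: "Z $$ (l,k) = Zn $$ (l,k)" if "k < n" "l < D" for k l
    using arg_cong[OF agree[rule_format, OF \<open>k < n\<close>], of "\<lambda>v. v $ l"] that n Z Zn by auto
  have "chi n (mat_adjoint Z * Z) \<le> (\<Sum>k<n. Re ((mat_adjoint Z * Z) $$ (k,k)))"
    by (rule ky_fan_diag[OF ZZ herm n])
  also have "\<dots> = (\<Sum>k<n. \<Sum>l<D. (cmod (Zn $$ (l,k)))^2)"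
    using n by (intro sum.cong) (auto simp: gram_diag[OF Z] entries)
  also have "\<dots> \<le> (\<Sum>k<D. \<Sum>l<D. (cmod (Zn $$ (l,k)))^2)"
    by (rule sum_mono2) (use n in \<open>auto intro: sum_nonneg\<close>)
  also have "\<dots> = Re (mtrace (mat_adjoint Zn * Zn))"
    by (rule mtrace_gram[OF Zn, symmetric])
  finally show ?thesis .
qed

lemma chi_le_trace_in_frame:
  fixes X Xn W :: "complex mat"
  assumes X: "X \<in> carrier_mat D D" and Xn: "Xn \<in> carrier_mat D D" and W: "unitary D W"
    and agree: "\<forall>k<n. col (mat_adjoint X * W) k = col (mat_adjoint Xn * W) k"
    and n: "1 \<le> n" "n \<le> D"
  shows "chi n (X * mat_adjoint X) \<le> Re (mtrace (Xn * mat_adjoint Xn))"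
proof -
  have Wc: "W \<in> carrier_mat D D" using W unfolding unitary_def by simp
  have frame: "mat_adjoint (mat_adjoint Y * W) * (mat_adjoint Y * W) = mat_adjoint W * (Y * mat_adjoint Y) * W"
    if Y: "Y \<in> carrier_mat D D" for Y
    using Y Wc by (simp add: adjoint_mult[of _ D D _ D] assoc_mult_mat[of _ D D _ D _ D]
        mult_carrier_mat[of _ D D _ D])
  have "chi n (X * mat_adjoint X) = chi n (mat_adjoint (mat_adjoint X * W) * (mat_adjoint X * W))"
    unfolding frame[OF X] using chi_unitary_conj[OF W] X by simp
  also have "\<dots> \<le> Re (mtrace (mat_adjoint (mat_adjoint Xn * W) * (mat_adjoint Xn * W)))"
    by (rule chi_gram_le_trace[OF _ _ agree n]) (use X Xn Wc in auto)
  also have "\<dots> = Re (mtrace (Xn * mat_adjoint Xn))"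
    unfolding frame[OF Xn] using mtrace_unitary_conj[OF W] Xn by simp
  finally show ?thesis .
qed

lemma unitary_with_annihilated_cols:
  fixes cs :: "complex vec list"
  assumes cs: "set cs \<subseteq> carrier_vec D" and len: "length cs + n \<le> D"
  shows "\<exists>W. unitary D W \<and> (\<forall>k<n. \<forall>c\<in>set cs. c \<bullet> col W k = 0)"
proof -
  have "orthonormal []" unfolding orthonormal_def by simp
  then obtain ws0 where ws0: "set ws0 \<subseteq> carrier_vec D" "orthonormal ws0" "length ws0 = n"
    "\<forall>c\<in>set cs. \<forall>u\<in>set ws0. c \<bullet> u = 0"
    using orthonormal_extend[of "[]" D cs n] cs len by auto
  obtain ws1 where ws1: "set ws1 \<subseteq> carrier_vec D" "orthonormal (ws0 @ ws1)" "length (ws0 @ ws1) = D"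
    using orthonormal_extend[of ws0 D "[]" D, OF ws0(1) ws0(2)] ws0(3) len by auto
  define W where "W = mat_of_cols D (ws0 @ ws1)"
  have "unitary D W" unfolding W_def by (rule unitary_of_orthonormal) (use ws0 ws1 in auto)
  moreover have "col W k = ws0 ! k" if "k < n" for k
    unfolding W_def using that ws0 ws1 len by (auto simp: nth_append nth_mem subsetD)
  ultimately show ?thesis using ws0(3,4) by (metis nth_mem)
qed

lemma diagm_dims[simp]: "dim_row (diagm D d) = D" "dim_col (diagm D d) = D"
  unfolding diagm_def by auto

lemma diagm_carrier[simp]: "diagm D d \<in> carrier_mat D D"
  by (simp add: carrier_matI)

lemma diagm_index[simp]: "i < D \<Longrightarrow> j < D \<Longrightarrow> diagm D d $$ (i,j) = (if i = j then d i else 0)"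
  unfolding diagm_def by auto

lemma diagm_adjoint_mult_vec:
  assumes y: "y \<in> carrier_vec D" and i: "i < D"
  shows "(mat_adjoint (diagm D d) *\<^sub>v y) $ i = cnj (d i) * y $ i"
proof -
  have "(mat_adjoint (diagm D d) *\<^sub>v y) $ i = (\<Sum>l\<in>{0..<D}. cnj (diagm D d $$ (l,i)) * y $ l)"
    using y i by (simp add: scalar_prod_def)
  also have "\<dots> = (\<Sum>l\<in>{0..<D}. if l = i then cnj (d i) * y $ i else 0)"
    using i by (intro sum.cong) auto
  finally show ?thesis using i by simp
qed

lemma truncated_diag_adjoint_eq:
  fixes A B :: "complex mat" and d :: "nat \<Rightarrow> complex"
  assumes A: "A \<in> carrier_mat D D" and B: "B \<in> carrier_mat D D" and u: "u \<in> carrier_vec D"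
    and vanish: "\<forall>j. n \<le> j \<longrightarrow> j < D \<longrightarrow> (mat_adjoint A *\<^sub>v u) $ j = 0"
  shows "mat_adjoint (A * diagm D d * B) *\<^sub>v u
       = mat_adjoint (A * diagm D (\<lambda>i. if i < n then d i else 0) * B) *\<^sub>v u"
proof -
  have factor: "mat_adjoint (A * \<psi> * B) *\<^sub>v u = mat_adjoint B *\<^sub>v (mat_adjoint \<psi> *\<^sub>v (mat_adjoint A *\<^sub>v u))"
    if \<psi>: "\<psi> \<in> carrier_mat D D" for \<psi>
  proof -
    have "mat_adjoint (A * \<psi> * B) = mat_adjoint B * (mat_adjoint \<psi> * mat_adjoint A)"
      using A B \<psi> by (simp add: adjoint_mult[of _ D D _ D]
          assoc_mult_mat[OF adjoint_carrier[OF B] adjoint_carrier[OF \<psi>] adjoint_carrier[OF A]])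
    also have "\<dots> *\<^sub>v u = mat_adjoint B *\<^sub>v ((mat_adjoint \<psi> * mat_adjoint A) *\<^sub>v u)"
      using A B \<psi> u by (intro assoc_mult_mat_vec[of _ D D]) auto
    finally show ?thesis using A \<psi> u by (simp add: assoc_mult_mat_vec[of _ D D _ D])

  qed
  define y where "y = mat_adjoint A *\<^sub>v u"
  have y: "y \<in> carrier_vec D" unfolding y_def using adjoint_carrier[OF A] u by (rule mult_mat_vec_carrier)
  have "mat_adjoint (diagm D d) *\<^sub>v y = mat_adjoint (diagm D (\<lambda>i. if i < n then d i else 0)) *\<^sub>v y"
  proof (rule eq_vecI)
    fix i assume "i < dim_vec (mat_adjoint (diagm D (\<lambda>i. if i < n then d i else 0)) *\<^sub>v y)"
    then have i: "i < D" by simp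
    show "(mat_adjoint (diagm D d) *\<^sub>v y) $ i
        = (mat_adjoint (diagm D (\<lambda>i. if i < n then d i else 0)) *\<^sub>v y) $ i"
      using vanish i y unfolding diagm_adjoint_mult_vec[OF y i] by (auto simp: y_def)
  qed simp
  then show ?thesis unfolding factor[OF diagm_carrier] y_def by simp
qed

lemma gram_of_triple_product:
  fixes A P B :: "complex mat"
  assumes A: "A \<in> carrier_mat D D" and P: "P \<in> carrier_mat D D" and B: "B \<in> carrier_mat D D"
  shows "A * P * B * mat_adjoint B * mat_adjoint P * mat_adjoint A
       = (A * P * B) * mat_adjoint (A * P * B)"
  using A P B by (simp add: adjoint_mult[of _ D D _ D] assoc_mult_mat[of _ D D _ D _ D]
      mult_carrier_mat[of _ D D _ D])

lemma adapted_unitary_frame: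
  fixes A :: "complex mat"
  assumes A: "A \<in> carrier_mat D D" and n: "n \<le> D"
  shows "\<exists>W. unitary D W \<and>
           (\<forall>k<n. \<forall>j. n \<le> j \<longrightarrow> j < D \<longrightarrow> (mat_adjoint A *\<^sub>v col W k) $ j = 0)"
proof -
  define cs where "cs = map (row (mat_adjoint A)) [n..<D]"
  have "set cs \<subseteq> carrier_vec D" "length cs + n \<le> D" unfolding cs_def using A n by auto
  then obtain W where W: "unitary D W" and annihilated: "\<forall>k<n. \<forall>c\<in>set cs. c \<bullet> col W k = 0"
    using unitary_with_annihilated_cols by blast
  have "(mat_adjoint A *\<^sub>v col W k) $ j = 0" if "k < n" "n \<le> j" "j < D" for k j
  proof -
    have "row (mat_adjoint A) j \<in> set cs" unfolding cs_def using that by simp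
    then have "row (mat_adjoint A) j \<bullet> col W k = 0" using annihilated that by blast
    then show ?thesis using that A by simp
  qed
  then show ?thesis using W by blast
qed

lemma adapted_frame_cols_agree:
  fixes A B W :: "complex mat" and d :: "nat \<Rightarrow> complex"
  assumes A: "A \<in> carrier_mat D D" and B: "B \<in> carrier_mat D D" and W: "unitary D W"
    and adapted: "\<forall>k<n. \<forall>j. n \<le> j \<longrightarrow> j < D \<longrightarrow> (mat_adjoint A *\<^sub>v col W k) $ j = 0"
    and n: "n \<le> D"
  shows "\<forall>k<n. col (mat_adjoint (A * diagm D d * B) * W) k
             = col (mat_adjoint (A * diagm D (\<lambda>i. if i < n then d i else 0) * B) * W) k"
proof (intro allI impI)
  fix k assume k: "k < n"
  have Wc: "W \<in> carrier_mat D D" using W unfolding unitary_def by simp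
  have cols: "col (mat_adjoint Y * W) k = mat_adjoint Y *\<^sub>v col W k"
    if "Y \<in> carrier_mat D D" for Y
    by (rule col_mult2[OF adjoint_carrier[OF that] Wc]) (use k n in simp)
  have w: "col W k \<in> carrier_vec D" using Wc by (simp add: carrier_vecI)
  have "mat_adjoint (A * diagm D d * B) *\<^sub>v col W k
      = mat_adjoint (A * diagm D (\<lambda>i. if i < n then d i else 0) * B) *\<^sub>v col W k"
    by (rule truncated_diag_adjoint_eq[OF A B w]) (use adapted k in blast)
  then show "col (mat_adjoint (A * diagm D d * B) * W) k
      = col (mat_adjoint (A * diagm D (\<lambda>i. if i < n then d i else 0) * B) * W) k"
    unfolding cols[OF mult_carrier_mat[OF mult_carrier_mat[OF A diagm_carrier] B]] .
qed

theorem lemma1: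
  fixes D n :: nat and A B :: "complex mat" and \<mu> :: "nat \<Rightarrow> real"
  assumes "A \<in> carrier_mat D D" and "B \<in> carrier_mat D D"
    and "\<forall>i<D. 0 \<le> \<mu> i"
    and "\<forall>i j. i \<le> j \<longrightarrow> j < D \<longrightarrow> \<mu> i \<le> \<mu> j"
    and "1 \<le> n" and "n \<le> D"
  shows "let \<psi> = diagm D (\<lambda>i. complex_of_real (\<mu> i));
             \<psi>n = diagm D (\<lambda>i. if i < n then complex_of_real (\<mu> i) else 0)
         in chi n (A * \<psi> * B * mat_adjoint B * mat_adjoint \<psi> * mat_adjoint A)
            \<le> Re (mtrace (A * \<psi>n * B * mat_adjoint B * mat_adjoint \<psi>n * mat_adjoint A))"
proof -
  note A = assms(1) and B = assms(2) and n = assms(5,6)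
  define \<psi> where "\<psi> = diagm D (\<lambda>i. complex_of_real (\<mu> i))"
  define \<psi>n where "\<psi>n = diagm D (\<lambda>i. if i < n then complex_of_real (\<mu> i) else 0)"
  obtain W where W: "unitary D W"
    and adapted: "\<forall>k<n. \<forall>j. n \<le> j \<longrightarrow> j < D \<longrightarrow> (mat_adjoint A *\<^sub>v col W k) $ j = 0"
    using adapted_unitary_frame[OF A n(2)] by blast
  have agree: "\<forall>k<n. col (mat_adjoint (A * \<psi> * B) * W) k = col (mat_adjoint (A * \<psi>n * B) * W) k"
    unfolding \<psi>_def \<psi>n_def by (rule adapted_frame_cols_agree[OF A B W adapted n(2)])
  have "chi n ((A * \<psi> * B) * mat_adjoint (A * \<psi> * B))
        \<le> Re (mtrace ((A * \<psi>n * B) * mat_adjoint (A * \<psi>n * B)))"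
    using mult_carrier_mat[OF mult_carrier_mat[OF A diagm_carrier] B]
    by (intro chi_le_trace_in_frame[OF _ _ W agree n]) (simp_all add: \<psi>_def \<psi>n_def)
  moreover have "A * \<psi> * B * mat_adjoint B * mat_adjoint \<psi> * mat_adjoint A
                 = (A * \<psi> * B) * mat_adjoint (A * \<psi> * B)"
    by (rule gram_of_triple_product[OF A _ B]) (simp add: \<psi>_def)
  moreover have "A * \<psi>n * B * mat_adjoint B * mat_adjoint \<psi>n * mat_adjoint A
                 = (A * \<psi>n * B) * mat_adjoint (A * \<psi>n * B)"
    by (rule gram_of_triple_product[OF A _ B]) (simp add: \<psi>n_def)
  ultimately show ?thesis unfolding Let_def \<psi>_def[symmetric] \<psi>n_def[symmetric] by simp
qed

end
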